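(* Let $F,G$ be non-constant functions analytic in some complex neighborhood of $0$, and suppose that neither the curve of $F$ nor the curve of $G$ bounces back at zero. Then the following are equivalent: (i) $F,G$ roughly agree near zero; (ii) $F,G$ share a curve around zero.
   Context: $\Sigma_0$ denotes the collection of open intervals in $\mathbb R$ containing $0$; for $\mathcal I\in\Sigma_0$ put $\mathcal I^+:=\mathcal I\cap[0,\infty)$, $\mathcal I^-:=\mathcal I\cap(-\infty,0]$. "There are arbitrarily short intervals with property P" means: for every $\varepsilon>0$ there are such intervals of length less than $\varepsilon$. The curve of $F$ bounces back at zero if there are arbitrarily short $\mathcal I\in\Sigma_0$ with $F(\mathcal I^+)=F(\mathcal I^-)$. $F,G$ share a curve around zero if there are arbitrarily short $\mathcal I,\mathcal J\in\Sigma_0$ with $F(\mathcal I)=G(\mathcal J)$. $F,G$ roughly agree near zero if there are sequences $(u_k)_{k\ge1},(v_k)_{k\ge1}$ of nonzero real numbers with $u_k\to0$, $v_k\to0$ and $F(u_k)=G(v_k)$ for all $k\ge1$. *)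

theory Defs
  imports "HOL-Analysis.Analysis"
begin

definition curve_img :: "(complex \<Rightarrow> complex) \<Rightarrow> real set \<Rightarrow> complex set" where
  "curve_img F I = F ` (complex_of_real ` I)"

text \<open>Sigma_0: open intervals of the real line containing 0. Only bounded ones can be
  arbitrarily short, so we parametrise them as a<..<b with a < 0 < b; length is b - a.\<close>

definition bounces_back :: "(complex \<Rightarrow> complex) \<Rightarrow> bool" where
  "bounces_back F \<longleftrightarrow> (\<forall>\<epsilon>>0. \<exists>a b::real. a < 0 \<and> 0 < b \<and> b - a < \<epsilon> \<and>
      curve_img F ({a<..<b} \<inter> {0..}) = curve_img F ({a<..<b} \<inter> {..0}))"

definition share_curve :: "(complex \<Rightarrow> complex) \<Rightarrow> (complex \<Rightarrow> complex) \<Rightarrow> bool" where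
  "share_curve F G \<longleftrightarrow> (\<forall>\<epsilon>>0. \<exists>a b c d::real. a < 0 \<and> 0 < b \<and> b - a < \<epsilon> \<and>
      c < 0 \<and> 0 < d \<and> d - c < \<epsilon> \<and> curve_img F {a<..<b} = curve_img G {c<..<d})"

definition roughly_agree :: "(complex \<Rightarrow> complex) \<Rightarrow> (complex \<Rightarrow> complex) \<Rightarrow> bool" where
  "roughly_agree F G \<longleftrightarrow> (\<exists>u v :: nat \<Rightarrow> real. (\<forall>k\<ge>1. u k \<noteq> 0 \<and> v k \<noteq> 0) \<and>
      u \<longlonglongrightarrow> 0 \<and> v \<longlonglongrightarrow> 0 \<and>
      (\<forall>k\<ge>1. F (complex_of_real (u k)) = G (complex_of_real (v k))))"

definition analytic_nonconst_near0 :: "(complex \<Rightarrow> complex) \<Rightarrow> bool" where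
  "analytic_nonconst_near0 F \<longleftrightarrow> (\<exists>r>0. F analytic_on ball 0 r \<and>
      \<not> (\<exists>c. \<forall>z\<in>ball 0 r. F z = c))"

end

(*
  Near 0 write F z - F 0 = \<phi> z ^ a and G z - G 0 = \<psi> z ^ b with \<phi>, \<psi> univalent, and choose
  m, n with m a = n b = L, not both even. If F (u k) = G (v k) along real u k, v k \<rightarrow> 0, pass to
  infinitely many k with constant signs \<sigma>, \<tau> and write u k = \<sigma> s k ^ m, v k = \<tau> t k ^ n with
  s k, t k > 0. In the substituted variables F (\<sigma> s ^ m) - F 0 = \<alpha> s ^ L and
  G (\<tau> t ^ n) - G 0 = \<beta> t ^ L with \<alpha>, \<beta> univalent, so \<alpha> (s k) = \<omega> \<beta> (t k) for one L-th root
  of unity \<omega> and infinitely many k. Then h = \<beta>\<inverse> \<circ> (\<alpha> / \<omega>) is univalent and maps the positive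
  reals s k to the positive reals t k, so it is real and increasing on the real axis, and
  F (\<sigma> s ^ m) = G (\<tau> h(s) ^ n) for real s near 0. If m and n are both odd, both sides are
  homeomorphic reparametrisations of the curves near 0, which are therefore shared; if one of
  them is even, that side is an even function of s and the other curve bounces back.
  Conversely, a shared curve forces F 0 = G 0, and a point x \<noteq> 0 of F's interval has a partner
  y on G's interval which is nonzero because F x \<noteq> F 0.
*)

theory Submission
  imports Defs "HOL-Complex_Analysis.Complex_Analysis"
begin

section \<open>Continuous injective real functions\<close>

lemma continuous_inj_imp_strict_mono_on:
  fixes f :: "'a::linear_continuum_topology \<Rightarrow> 'b::linorder_topology"
  assumes cont: "continuous_on {a..b} f" and inj: "inj_on f {a..b}" and "f a < f b"
  shows "strict_mono_on {a..b} f"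
proof -
  have sub: "continuous_on {a..y} f" "inj_on f {a..y}" if "y \<le> b" for y
  proof -
    have "{a..y} \<subseteq> {a..b}"
      using that by auto
    then show "continuous_on {a..y} f" "inj_on f {a..y}"
      using continuous_on_subset[OF cont] inj_on_subset[OF inj] by blast+
  qed
  have above_left: "f a < f y" if "a < y" "y \<le> b" for y
  proof (cases "y = b")
    case False
    with that(2) have "y < b"
      by (simp add: order.not_eq_order_implies_strict)
    then show ?thesis
      using continuous_inj_imp_mono[OF that(1) _ cont inj] \<open>f a < f b\<close> by (meson order.strict_trans)
  qed (use \<open>f a < f b\<close> in simp)
  show ?thesis
  proof (rule strict_mono_onI)
    fix x y assume xy: "x \<in> {a..b}" "y \<in> {a..b}" "x < y"
    show "f x < f y"
    proof (cases "x = a")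
      case False
      with xy have "a < x" "x < y" "y \<le> b"
        by (auto simp: order.not_eq_order_implies_strict)
      then show ?thesis
        using continuous_inj_imp_mono[of a x y f] sub[of y] above_left[of y] by (meson order.strict_trans)
    qed (use above_left xy in auto)
  qed
qed

lemma inj_on_mult_odd_power:
  fixes f :: "'a \<Rightarrow> real"
  assumes "inj_on f A" "odd n" "c \<noteq> 0"
  shows "inj_on (\<lambda>s. c * f s ^ n) A"
  using assms unfolding inj_on_def by (metis mult_left_cancel odd_real_root_power_cancel)

lemma sign_of_mult_odd_power_strict_mono:
  fixes h :: "real \<Rightarrow> real"
  assumes "strict_mono_on {-\<delta>..\<delta>} h" "h 0 = 0" "odd n" "\<tau> \<noteq> 0" "s \<in> {-\<delta>..\<delta>}"
  shows "0 \<le> \<tau> * h s ^ n \<longleftrightarrow> 0 \<le> \<tau> * s" and "\<tau> * h s ^ n \<le> 0 \<longleftrightarrow> \<tau> * s \<le> 0"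
proof -
  have "0 \<in> {-\<delta>..\<delta>}"
    using assms(5) by auto
  then have "0 \<le> h s \<longleftrightarrow> 0 \<le> s" "h s \<le> 0 \<longleftrightarrow> s \<le> 0"
    using strict_mono_on_less_eq[OF assms(1), of 0 s] strict_mono_on_less_eq[OF assms(1), of s 0]
      assms(2,5) by auto
  then show "0 \<le> \<tau> * h s ^ n \<longleftrightarrow> 0 \<le> \<tau> * s" "\<tau> * h s ^ n \<le> 0 \<longleftrightarrow> \<tau> * s \<le> 0"
    using assms(3,4)
    by (auto simp: zero_le_mult_iff mult_le_0_iff zero_le_odd_power power_le_zero_eq odd_pos)
qed

lemma continuous_inj_centred_image:
  fixes W :: "real \<Rightarrow> real"
  assumes cont: "continuous_on {-\<delta>..\<delta>} W" and inj: "inj_on W {-\<delta>..\<delta>}" and "W 0 = 0"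
    and "\<delta> > 0" "e > 0"
  shows "\<forall>\<^sub>F d in at_right 0. d < \<delta> \<and>
    (\<exists>a b. a < 0 \<and> 0 < b \<and> b - a < e \<and> W ` {-d<..<d} = {a<..<b})"
proof -
  obtain \<eta> where "\<eta> > 0" and small: "\<And>x. x \<in> {-\<delta>..\<delta>} \<Longrightarrow> dist x 0 < \<eta> \<Longrightarrow> dist (W x) (W 0) < e / 2"
    using cont \<open>\<delta> > 0\<close> \<open>e > 0\<close> unfolding continuous_on_iff
    by (metis atLeastAtMost_iff half_gt_zero neg_le_0_iff_le order_less_imp_le)
  have "\<forall>\<^sub>F d in at_right 0. d \<in> {0<..<min \<delta> \<eta>}"
    using \<open>\<delta> > 0\<close> \<open>\<eta> > 0\<close> by (intro eventually_at_right_real) simp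
  then show ?thesis
  proof (rule eventually_mono)
    fix d assume d: "d \<in> {0<..<min \<delta> \<eta>}"
    have segment: "closed_segment (-d) d = {-d..d}" "open_segment (-d) d = {-d<..<d}"
      using d by (auto simp: closed_segment_eq_real_ivl open_segment_eq_real_ivl)
    have "{-d..d} \<subseteq> {-\<delta>..\<delta>}"
      using d by auto
    then have "W ` {-d<..<d} = open_segment (W (-d)) (W d)"
      using continuous_injective_image_open_segment_1[of "-d" d W] unfolding segment
      by (meson continuous_on_subset[OF cont] inj_on_subset[OF inj])
    also have "\<dots> = {min (W (-d)) (W d)<..<max (W (-d)) (W d)}"
      by (auto simp: open_segment_eq_real_ivl)
    finally have image: "W ` {-d<..<d} = {min (W (-d)) (W d)<..<max (W (-d)) (W d)}" .
    have "0 \<in> W ` {-d<..<d}"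
      using d \<open>W 0 = 0\<close> by force
    moreover have "\<bar>W (-d)\<bar> < e / 2" "\<bar>W d\<bar> < e / 2"
      using small[of d] small[of "-d"] d \<open>W 0 = 0\<close> by (auto simp: dist_real_def)
    ultimately show "d < \<delta> \<and> (\<exists>a b. a < 0 \<and> 0 < b \<and> b - a < e \<and> W ` {-d<..<d} = {a<..<b})"
      using d unfolding image by (intro conjI exI[of _ "min (W (-d)) (W d)"] exI[of _ "max (W (-d)) (W d)"]) auto
  qed
qed

section \<open>Local facts about holomorphic functions\<close>

lemma holomorphic_nth_root_exists:
  assumes "convex S" "open S" "f holomorphic_on S" "\<And>z. z \<in> S \<Longrightarrow> f z \<noteq> 0" "n > 0"
  obtains g where "g holomorphic_on S" "\<And>z. z \<in> S \<Longrightarrow> g z ^ n = f z"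
proof (cases "S = {}")
  case True
  then show thesis using that[of f] assms(3) by auto
next
  case False
  then obtain z0 where "z0 \<in> S" by blast
  then obtain l where l: "l holomorphic_on S" "\<And>z. z \<in> S \<Longrightarrow> exp (l z) = f z"
    using holomorphic_logarithm_exists[OF assms(1-4)] by metis
  show thesis
  proof (rule that)
    show "(\<lambda>z. exp (l z / of_nat n)) holomorphic_on S"
      by (intro holomorphic_intros l holomorphic_on_compose_gen[where g=exp, unfolded o_def]) auto
    show "exp (l z / of_nat n) ^ n = f z" if "z \<in> S" for z
      using assms(5) l(2)[OF that] by (simp flip: exp_of_nat_mult)
  qed
qed

lemma holomorphic_mult_id_locally_injective:
  assumes "R holomorphic_on ball 0 \<rho>" "\<rho> > 0" "R 0 \<noteq> 0"
  obtains r where "r > 0" "r \<le> \<rho>" "inj_on (\<lambda>z. z * R z) (ball 0 r)"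
proof -
  have "0 \<in> ball (0::complex) \<rho>"
    using assms(2) by simp
  have "(R has_field_derivative deriv R 0) (at 0)"
    using holomorphic_derivI[OF assms(1) open_ball \<open>0 \<in> ball 0 \<rho>\<close>] .
  from DERIV_mult[OF DERIV_ident this]
  have "((\<lambda>z. z * R z) has_field_derivative R 0) (at 0)"
    by simp
  then have "deriv (\<lambda>z. z * R z) 0 \<noteq> 0"
    using assms(3) by (simp add: DERIV_imp_deriv)
  moreover have "(\<lambda>z. z * R z) holomorphic_on ball 0 \<rho>"
    by (intro holomorphic_intros assms(1))
  ultimately obtain r where "r > 0" "ball (0::complex) r \<subseteq> ball 0 \<rho>" "inj_on (\<lambda>z. z * R z) (ball 0 r)"
    using has_complex_derivative_locally_injective[OF _ \<open>0 \<in> ball 0 \<rho>\<close> open_ball] by blast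
  moreover have "r \<le> \<rho>"
    using \<open>ball 0 r \<subseteq> ball 0 \<rho>\<close> \<open>r > 0\<close> by (simp add: ball_subset_ball_iff)
  ultimately show thesis
    using that by blast
qed

lemma holomorphic_lift_through_injective:
  assumes "\<alpha> holomorphic_on ball 0 \<rho>" "\<rho> > 0" "\<alpha> 0 = 0"
    and "\<beta> holomorphic_on ball 0 r" "inj_on \<beta> (ball 0 r)" "r > 0" "\<beta> 0 = 0"
  obtains \<delta> h where "0 < \<delta>" "\<delta> \<le> \<rho>" "h holomorphic_on ball 0 \<delta>" "h 0 = 0"
    "\<And>z. z \<in> ball 0 \<delta> \<Longrightarrow> h z \<in> ball 0 r \<and> \<beta> (h z) = \<alpha> z"
proof -
  obtain g where g: "g holomorphic_on \<beta> ` ball 0 r" "\<And>z. z \<in> ball 0 r \<Longrightarrow> g (\<beta> z) = z"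
    using holomorphic_has_inverse[OF assms(4) open_ball assms(5)] by metis
  have "open (ball 0 \<rho> \<inter> \<alpha> -` (\<beta> ` ball 0 r))"
    using open_mapping_thm3[OF assms(4) open_ball assms(5)] assms(1)
    by (intro continuous_open_preimage holomorphic_on_imp_continuous_on) auto
  moreover have "0 \<in> ball 0 \<rho> \<inter> \<alpha> -` (\<beta> ` ball 0 r)"
    using assms(2,3,6,7) by (auto intro!: image_eqI[of 0])
  ultimately obtain \<delta> where "\<delta> > 0" and \<delta>: "ball 0 \<delta> \<subseteq> ball 0 \<rho> \<inter> \<alpha> -` (\<beta> ` ball 0 r)"
    by (meson openE)
  show thesis
  proof (rule that[of \<delta> "g \<circ> \<alpha>"])
    show "\<delta> \<le> \<rho>"
      using \<delta> \<open>\<delta> > 0\<close> by (auto simp: ball_subset_ball_iff)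
    show "(g \<circ> \<alpha>) holomorphic_on ball 0 \<delta>"
      using \<delta> by (intro holomorphic_on_compose_gen[OF holomorphic_on_subset[OF assms(1)] g(1)]) auto
    show "(g \<circ> \<alpha>) 0 = 0"
      using g(2)[of 0] assms(3,6,7) by simp
    show "(g \<circ> \<alpha>) z \<in> ball 0 r \<and> \<beta> ((g \<circ> \<alpha>) z) = \<alpha> z" if "z \<in> ball 0 \<delta>" for z
      using \<delta> that g(2) by auto
  qed (use \<open>\<delta> > 0\<close> in auto)
qed

lemma holomorphic_real_on_reals:
  assumes hol: "h holomorphic_on S" and "open S" "connected S" "cnj ` S \<subseteq> S"
    and "\<xi> \<in> S" "\<xi> islimpt Z" "Z \<subseteq> S \<inter> \<real>" "\<And>z. z \<in> Z \<Longrightarrow> h z \<in> \<real>"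
    and "x \<in> S \<inter> \<real>"
  shows "h x \<in> \<real>"
proof -
  define H where "H z = h z - cnj (h (cnj z))" for z
  have "(cnj \<circ> h \<circ> cnj) holomorphic_on S"
    using holomorphic_on_subset[OF hol \<open>cnj ` S \<subseteq> S\<close>] \<open>open S\<close> by (rule holomorphic_on_compose_cnj_cnj)
  then have "H holomorphic_on S"
    unfolding H_def using hol by (intro holomorphic_intros) (auto simp: o_def)
  moreover have "H z = 0" if "z \<in> Z" for z
    using that assms(7,8) unfolding H_def by (auto simp: Reals_cnj_iff)
  ultimately have "H x = 0"
    using analytic_continuation[of H S Z \<xi> x] assms(2,3,5-7,9) by auto
  then show ?thesis
    using \<open>x \<in> S \<inter> \<real>\<close> unfolding H_def by (auto simp: Reals_cnj_iff)
qed

lemma holomorphic_real_on_reals_near_0: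
  assumes "H holomorphic_on ball 0 r" "s \<longlonglongrightarrow> 0"
    and "\<exists>\<^sub>F k in sequentially. s k \<noteq> 0 \<and> H (of_real (s k)) \<in> \<real>" "\<bar>x\<bar> < r"
  shows "H (of_real x) \<in> \<real>"
proof -
  define Z where "Z = {complex_of_real (s k) | k. s k \<noteq> 0 \<and> \<bar>s k\<bar> < r \<and> H (of_real (s k)) \<in> \<real>}"
  have "0 islimpt Z"
    unfolding islimpt_approachable
  proof (intro allI impI)
    fix \<epsilon> :: real assume "\<epsilon> > 0"
    have "min \<epsilon> r > 0"
      using \<open>\<epsilon> > 0\<close> \<open>\<bar>x\<bar> < r\<close> by simp
    with tendsto_rabs_zero[OF \<open>s \<longlonglongrightarrow> 0\<close>] have "\<forall>\<^sub>F k in sequentially. \<bar>s k\<bar> < min \<epsilon> r"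
      by (rule order_tendstoD(2))
    with assms(3) have "\<exists>\<^sub>F k in sequentially. (s k \<noteq> 0 \<and> H (of_real (s k)) \<in> \<real>) \<and> \<bar>s k\<bar> < min \<epsilon> r"
      by (rule frequently_eventually_frequently)
    then obtain k where "s k \<noteq> 0" "H (of_real (s k)) \<in> \<real>" "\<bar>s k\<bar> < min \<epsilon> r"
      by (auto dest: frequently_ex)
    then show "\<exists>z\<in>Z. z \<noteq> 0 \<and> dist z 0 < \<epsilon>"
      unfolding Z_def by (intro bexI[of _ "of_real (s k)"]) auto
  qed
  moreover have "Z \<subseteq> ball 0 r \<inter> \<real>" "\<And>z. z \<in> Z \<Longrightarrow> H z \<in> \<real>" "cnj ` ball 0 r \<subseteq> ball 0 r"
    unfolding Z_def by auto
  moreover have "0 < r"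
    using \<open>\<bar>x\<bar> < r\<close> by linarith
  ultimately show ?thesis
    using holomorphic_real_on_reals[OF assms(1) open_ball connected_ball, of 0 Z "of_real x"] \<open>\<bar>x\<bar> < r\<close>
    by auto
qed

lemma holomorphic_real_restriction_strict_mono:
  assumes "H holomorphic_on ball 0 r" "inj_on H (ball 0 r)" "H 0 = 0"
    and real: "\<And>x. \<bar>x\<bar> < r \<Longrightarrow> H (of_real x) \<in> \<real>"
    and "0 < \<delta>" "\<delta> < r" "0 < Re (H (of_real \<delta>))"
  shows "continuous_on {-\<delta>..\<delta>} (\<lambda>x. Re (H (of_real x)))"
    and "strict_mono_on {-\<delta>..\<delta>} (\<lambda>x. Re (H (of_real x)))"
proof -
  let ?h = "\<lambda>x. Re (H (of_real x))"
  have in_ball: "of_real x \<in> ball (0::complex) r" if "x \<in> {-\<delta>..\<delta>}" for x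
    using that \<open>\<delta> < r\<close> by (auto simp: abs_less_iff)
  have "continuous_on {-\<delta>..\<delta>} (\<lambda>x. H (of_real x))"
    using in_ball
    by (intro continuous_on_compose2[OF holomorphic_on_imp_continuous_on[OF assms(1)]])
      (auto intro: continuous_intros)
  then show cont: "continuous_on {-\<delta>..\<delta>} ?h"
    by (rule continuous_on_Re)
  have inj: "inj_on ?h {-\<delta>..\<delta>}"
  proof (rule inj_onI)
    fix x y assume xy: "x \<in> {-\<delta>..\<delta>}" "y \<in> {-\<delta>..\<delta>}" "?h x = ?h y"
    have "H (of_real x) \<in> \<real>" "H (of_real y) \<in> \<real>"
      using real xy(1,2) \<open>\<delta> < r\<close> by auto
    then have "H (of_real x) = H (of_real y)"
      using xy(3) by (simp add: complex_is_Real_iff complex_eq_iff)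
    then have "(of_real x :: complex) = of_real y"
      using inj_onD[OF assms(2)] in_ball xy(1,2) by blast
    then show "x = y"
      by simp
  qed
  have "?h 0 = 0"
    using \<open>H 0 = 0\<close> by simp
  then have "?h (-\<delta>) < ?h \<delta>"
    using continuous_inj_imp_mono[of "-\<delta>" 0 \<delta> ?h, OF _ _ cont inj] assms(5,7) by linarith
  then show "strict_mono_on {-\<delta>..\<delta>} ?h"
    by (rule continuous_inj_imp_strict_mono_on[OF cont inj])
qed

lemma real_conjugacy_from_frequent_matches:
  assumes \<alpha>: "\<alpha> holomorphic_on ball 0 \<rho>" "inj_on \<alpha> (ball 0 \<rho>)" "\<alpha> 0 = 0" "\<rho> > 0"
    and \<beta>: "\<beta> holomorphic_on ball 0 r" "inj_on \<beta> (ball 0 r)" "\<beta> 0 = 0" "r > 0"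
    and "s \<longlonglongrightarrow> 0" "t \<longlonglongrightarrow> 0"
    and match: "\<exists>\<^sub>F k in sequentially. 0 < s k \<and> 0 < t k \<and> \<alpha> (of_real (s k)) = \<beta> (of_real (t k))"
  obtains \<delta> h where "0 < \<delta>" "\<delta> < \<rho>" "continuous_on {-\<delta>..\<delta>} h" "strict_mono_on {-\<delta>..\<delta>} h" "h 0 = 0"
    "\<And>x. x \<in> {-\<delta>..\<delta>} \<Longrightarrow> (of_real (h x) :: complex) \<in> ball 0 r \<and> \<beta> (of_real (h x)) = \<alpha> (of_real x)"
proof -
  obtain \<delta>0 H where "0 < \<delta>0" "\<delta>0 \<le> \<rho>" and hol: "H holomorphic_on ball 0 \<delta>0" and "H 0 = 0"
    and lift: "\<And>z. z \<in> ball 0 \<delta>0 \<Longrightarrow> H z \<in> ball 0 r \<and> \<beta> (H z) = \<alpha> z"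
    using holomorphic_lift_through_injective[OF \<alpha>(1,4,3) \<beta>(1,2,4,3)] by blast
  have inj: "inj_on H (ball 0 \<delta>0)"
  proof (rule inj_onI)
    fix x y assume xy: "x \<in> ball 0 \<delta>0" "y \<in> ball 0 \<delta>0" "H x = H y"
    then have "\<alpha> x = \<alpha> y"
      using lift[of x] lift[of y] by simp
    moreover have "x \<in> ball 0 \<rho>" "y \<in> ball 0 \<rho>"
      using xy(1,2) \<open>\<delta>0 \<le> \<rho>\<close> by auto
    ultimately show "x = y"
      using inj_onD[OF \<alpha>(2)] by blast
  qed
  \<comment> \<open>By injectivity of \<open>\<beta>\<close>, \<open>H\<close> maps the positive reals \<open>s k\<close> to the positive reals \<open>t k\<close>.\<close>
  have "\<forall>\<^sub>F k in sequentially. s k < \<delta>0 \<and> t k < r"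
    using \<open>0 < \<delta>0\<close> \<open>r > 0\<close>
    by (intro eventually_conj order_tendstoD(2)[OF \<open>s \<longlonglongrightarrow> 0\<close>] order_tendstoD(2)[OF \<open>t \<longlonglongrightarrow> 0\<close>])
  with match have H_match:
      "\<exists>\<^sub>F k in sequentially. 0 < s k \<and> s k < \<delta>0 \<and> 0 < t k \<and> H (of_real (s k)) = of_real (t k)"
  proof (rule frequently_eventually_frequently[THEN frequently_elim1], elim conjE)
    fix k assume k: "0 < s k" "0 < t k" "\<alpha> (of_real (s k)) = \<beta> (of_real (t k))" "s k < \<delta>0" "t k < r"
    then have "H (of_real (s k)) \<in> ball 0 r" "\<beta> (H (of_real (s k))) = \<beta> (of_real (t k))"
      using lift[of "of_real (s k)"] by auto
    then show "0 < s k \<and> s k < \<delta>0 \<and> 0 < t k \<and> H (of_real (s k)) = of_real (t k)"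
      using inj_onD[OF \<beta>(2)] k by auto
  qed
  have "\<exists>\<^sub>F k in sequentially. s k \<noteq> 0 \<and> H (of_real (s k)) \<in> \<real>"
    using H_match by (rule frequently_elim1) auto
  note real = holomorphic_real_on_reals_near_0[OF hol \<open>s \<longlonglongrightarrow> 0\<close> this]
  obtain k where "0 < s k" "s k < \<delta>0" "0 < t k" "H (of_real (s k)) = of_real (t k)"
    using frequently_ex[OF H_match] by blast
  then have "0 < s k" "s k < \<delta>0" "Re (H (of_real (s k))) > 0"
    by auto
  note h = holomorphic_real_restriction_strict_mono[OF hol inj \<open>H 0 = 0\<close> real this]
  show thesis
  proof (rule that[OF \<open>0 < s k\<close> _ h])
    show "s k < \<rho>"
      using \<open>s k < \<delta>0\<close> \<open>\<delta>0 \<le> \<rho>\<close> by simp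
    show "Re (H (of_real 0)) = 0"
      using \<open>H 0 = 0\<close> by simp
    show "(of_real (Re (H (of_real x))) :: complex) \<in> ball 0 r \<and> \<beta> (of_real (Re (H (of_real x)))) = \<alpha> (of_real x)"
      if "x \<in> {-s k..s k}" for x
    proof -
      have "\<bar>x\<bar> < \<delta>0"
        using that \<open>s k < \<delta>0\<close> by (auto simp: abs_less_iff)
      then have "of_real (Re (H (of_real x))) = H (of_real x)"
        using real by (simp add: complex_is_Real_iff complex_eq_iff)
      then show ?thesis
        using lift[of "of_real x"] \<open>\<bar>x\<bar> < \<delta>0\<close> by (simp add: dist_norm)
    qed
  qed
qed

section \<open>Normal form of a non-constant analytic function at 0\<close>

lemma analytic_nonconst_near0_factor:
  assumes "analytic_nonconst_near0 F"
  obtains r a p where "r > 0" "a > 0" "p holomorphic_on ball 0 r"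
    "\<And>z. z \<in> ball 0 r \<Longrightarrow> p z \<noteq> 0 \<and> F z - F 0 = (z * p z) ^ a"
proof -
  obtain r0 where r0: "r0 > 0" "F analytic_on ball 0 r0" "\<not> (\<exists>c. \<forall>z\<in>ball 0 r0. F z = c)"
    using assms unfolding analytic_nonconst_near0_def by blast
  have hol: "(\<lambda>z. F z - F 0) holomorphic_on ball 0 r0"
    using r0(2) by (intro holomorphic_intros analytic_imp_holomorphic)
  have nonconst: "\<not> (\<lambda>z. F z - F 0) constant_on ball 0 r0"
    using r0(3) unfolding constant_on_def by (metis diff_eq_eq)
  obtain g r a where g: "0 < a" "0 < r" "g holomorphic_on ball 0 r"
      "\<And>w. w \<in> ball 0 r \<Longrightarrow> F w - F 0 = w ^ a * g w" "\<And>w. w \<in> ball 0 r \<Longrightarrow> g w \<noteq> 0"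
    by (rule holomorphic_factor_zero_nonconstant[OF hol open_ball connected_ball _ _ nonconst])
      (use r0(1) in auto)
  obtain p where p: "p holomorphic_on ball 0 r" "\<And>z. z \<in> ball 0 r \<Longrightarrow> p z ^ a = g z"
    using holomorphic_nth_root_exists[OF convex_ball open_ball g(3,5,1)] by metis
  show thesis
  proof (rule that[OF g(2,1) p(1)])
    show "p z \<noteq> 0 \<and> F z - F 0 = (z * p z) ^ a" if "z \<in> ball 0 r" for z
      using p(2)[OF that] g(1) g(4,5)[OF that] by (auto simp: power_mult_distrib power_0_left)
  qed
qed

lemma analytic_nonconst_near0_isCont:
  assumes "analytic_nonconst_near0 F"
  shows "isCont F 0"
proof -
  obtain r where "r > 0" "F analytic_on ball 0 r"
    using assms unfolding analytic_nonconst_near0_def by blast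
  then show ?thesis
    by (meson analytic_at_imp_isCont analytic_on_analytic_at centre_in_ball)
qed

lemma analytic_nonconst_near0_isolated_value:
  assumes "analytic_nonconst_near0 F"
  obtains r where "r > 0" "\<And>z. z \<noteq> 0 \<Longrightarrow> norm z < r \<Longrightarrow> F z \<noteq> F 0"
proof -
  obtain r a p where "r > 0" "a > 0" "p holomorphic_on ball 0 r"
    "\<And>z. z \<in> ball 0 r \<Longrightarrow> p z \<noteq> 0 \<and> F z - F 0 = (z * p z) ^ a"
    using analytic_nonconst_near0_factor[OF assms] by blast
  then show thesis
    using that[of r] by fastforce
qed

text \<open>Substituting \<open>c * s ^ m\<close> multiplies the order of the zero of \<open>F - F 0\<close> by \<open>m\<close>; this is how
  the orders of the two functions are made equal.\<close>

lemma power_substitution_normal_form: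
  assumes "r > 0" "p holomorphic_on ball 0 r"
    and factor: "\<And>z. z \<in> ball 0 r \<Longrightarrow> p z \<noteq> 0 \<and> F z - F 0 = (z * p z) ^ a"
    and "m > 0" "norm c = 1"
  obtains \<rho> \<alpha> where "\<rho> > 0" "\<alpha> holomorphic_on ball 0 \<rho>" "inj_on \<alpha> (ball 0 \<rho>)" "\<alpha> 0 = 0"
    "\<And>s. s \<in> ball 0 \<rho> \<Longrightarrow> F (c * s ^ m) - F 0 = \<alpha> s ^ (m * a)"
proof -
  define \<rho>0 where "\<rho>0 = min 1 r"
  have \<rho>0: "\<rho>0 > 0" "\<rho>0 \<le> 1" "\<rho>0 \<le> r"
    using assms(1) unfolding \<rho>0_def by auto
  have subst_in_ball: "c * s ^ m \<in> ball 0 r" if "s \<in> ball 0 \<rho>0" for s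
  proof -
    have "norm (c * s ^ m) = norm s ^ m"
      by (simp add: norm_mult norm_power assms(5))
    also have "\<dots> \<le> norm s ^ 1"
      using that \<rho>0(2) assms(4) by (intro power_decreasing) auto
    finally show ?thesis
      using that \<rho>0(3) by simp
  qed
  define f where "f s = c * p (c * s ^ m)" for s
  have "f holomorphic_on ball 0 \<rho>0"
    unfolding f_def using subst_in_ball
    by (intro holomorphic_intros holomorphic_on_compose_gen[OF _ assms(2), unfolded o_def]) auto
  moreover have f_nonzero: "f s \<noteq> 0" if "s \<in> ball 0 \<rho>0" for s
    using factor[OF subst_in_ball[OF that]] assms(5) unfolding f_def by auto
  ultimately obtain R where R: "R holomorphic_on ball 0 \<rho>0" "\<And>s. s \<in> ball 0 \<rho>0 \<Longrightarrow> R s ^ m = f s"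
    using holomorphic_nth_root_exists[OF convex_ball open_ball _ _ assms(4)] by metis
  have "R 0 \<noteq> 0"
    using R(2)[of 0] f_nonzero[of 0] \<rho>0(1) assms(4) by (auto simp: power_0_left)
  then obtain \<rho> where \<rho>: "\<rho> > 0" "\<rho> \<le> \<rho>0" "inj_on (\<lambda>s. s * R s) (ball 0 \<rho>)"
    using holomorphic_mult_id_locally_injective[OF R(1) \<rho>0(1)] by blast
  show thesis
  proof (rule that[OF \<rho>(1) _ \<rho>(3)])
    show "(\<lambda>s. s * R s) holomorphic_on ball 0 \<rho>"
      using \<rho>(2) by (intro holomorphic_intros holomorphic_on_subset[OF R(1)]) auto
    show "F (c * s ^ m) - F 0 = (s * R s) ^ (m * a)" if "s \<in> ball 0 \<rho>" for s
    proof -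
      have s: "s \<in> ball 0 \<rho>0"
        using that \<rho>(2) by auto
      have "F (c * s ^ m) - F 0 = (c * s ^ m * p (c * s ^ m)) ^ a"
        using factor[OF subst_in_ball[OF s]] by simp
      also have "c * s ^ m * p (c * s ^ m) = (s * R s) ^ m"
        using R(2)[OF s] unfolding f_def by (simp add: power_mult_distrib mult_ac)
      finally show ?thesis
        by (simp add: power_mult)
    qed
  qed simp
qed

section \<open>Curves related by powers\<close>

definition related_by_powers ::
    "(complex \<Rightarrow> complex) \<Rightarrow> (complex \<Rightarrow> complex) \<Rightarrow> nat \<Rightarrow> nat \<Rightarrow> real \<Rightarrow> real \<Rightarrow> real \<Rightarrow> (real \<Rightarrow> real) \<Rightarrow> bool"
  where "related_by_powers F G m n \<sigma> \<tau> \<delta> h \<longleftrightarrow> 0 < \<delta> \<and> \<sigma> \<noteq> 0 \<and> \<tau> \<noteq> 0 \<and>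
    continuous_on {-\<delta>..\<delta>} h \<and> strict_mono_on {-\<delta>..\<delta>} h \<and> h 0 = 0 \<and>
    (\<forall>s\<in>{-\<delta>..\<delta>}. F (of_real (\<sigma> * s ^ m)) = G (of_real (\<tau> * h s ^ n)))"

lemma related_by_powers_sym:
  assumes "related_by_powers F G m n \<sigma> \<tau> \<delta> h"
  obtains \<eta> g where "related_by_powers G F n m \<tau> \<sigma> \<eta> g"
proof -
  have \<delta>: "0 < \<delta>" and "\<sigma> \<noteq> 0" "\<tau> \<noteq> 0" and cont: "continuous_on {-\<delta>..\<delta>} h"
    and mono: "strict_mono_on {-\<delta>..\<delta>} h" and "h 0 = 0"
    and eq: "\<And>s. s \<in> {-\<delta>..\<delta>} \<Longrightarrow> F (of_real (\<sigma> * s ^ m)) = G (of_real (\<tau> * h s ^ n))"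
    using assms unfolding related_by_powers_def by auto
  have "h (-\<delta>) < 0" "0 < h \<delta>"
    using strict_mono_onD[OF mono, of "-\<delta>" 0] strict_mono_onD[OF mono, of 0 \<delta>] \<delta> \<open>h 0 = 0\<close> by auto
  define \<eta> where "\<eta> = min (- h (-\<delta>)) (h \<delta>)"
  have "\<eta> > 0"
    unfolding \<eta>_def using \<open>h (-\<delta>) < 0\<close> \<open>0 < h \<delta>\<close> by simp
  have covered: "{-\<eta>..\<eta>} \<subseteq> h ` {-\<delta>..\<delta>}"
  proof
    fix t assume "t \<in> {-\<eta>..\<eta>}"
    then have "h (-\<delta>) \<le> t" "t \<le> h \<delta>"
      unfolding \<eta>_def by auto
    then obtain s where "-\<delta> \<le> s" "s \<le> \<delta>" "h s = t"
      using IVT'[OF _ _ _ cont] \<delta> by fastforce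
    then show "t \<in> h ` {-\<delta>..\<delta>}"
      by auto
  qed
  define g where "g = the_inv_into {-\<delta>..\<delta>} h"
  have inj: "inj_on h {-\<delta>..\<delta>}"
    using mono by (rule strict_mono_on_imp_inj_on)
  have g_h: "g (h s) = s" if "s \<in> {-\<delta>..\<delta>}" for s
    unfolding g_def using the_inv_into_f_f[OF inj that] .
  have h_g: "g t \<in> {-\<delta>..\<delta>} \<and> h (g t) = t" if "t \<in> {-\<eta>..\<eta>}" for t
    using covered that unfolding g_def by (auto simp: the_inv_into_f_f[OF inj])
  show thesis
  proof (rule that, unfold related_by_powers_def, intro conjI ballI)
    show "continuous_on {-\<eta>..\<eta>} g"
      using continuous_on_subset[OF continuous_on_inv[OF cont compact_Icc] covered] g_h by blast
    show "strict_mono_on {-\<eta>..\<eta>} g"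
      by (rule strict_mono_onI) (metis h_g strict_mono_on_less[OF mono])
    show "g 0 = 0"
      using g_h[of 0] \<delta> \<open>h 0 = 0\<close> by simp
    show "G (of_real (\<tau> * t ^ n)) = F (of_real (\<sigma> * g t ^ m))" if "t \<in> {-\<eta>..\<eta>}" for t
      using eq h_g[OF that] by metis
  qed (use \<open>\<eta> > 0\<close> \<open>\<sigma> \<noteq> 0\<close> \<open>\<tau> \<noteq> 0\<close> in auto)
qed

lemma related_by_powers_share_curve:
  assumes "related_by_powers F G m n \<sigma> \<tau> \<delta> h" "odd m" "odd n"
  shows "share_curve F G"
  unfolding share_curve_def
proof (intro allI impI)
  fix e :: real assume "e > 0"
  have \<delta>: "0 < \<delta>" and "\<sigma> \<noteq> 0" "\<tau> \<noteq> 0" and cont: "continuous_on {-\<delta>..\<delta>} h"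
    and mono: "strict_mono_on {-\<delta>..\<delta>} h" and "h 0 = 0"
    and eq: "\<And>s. s \<in> {-\<delta>..\<delta>} \<Longrightarrow> F (of_real (\<sigma> * s ^ m)) = G (of_real (\<tau> * h s ^ n))"
    using assms unfolding related_by_powers_def by auto
  define U where "U s = \<sigma> * s ^ m" for s
  define V where "V s = \<tau> * h s ^ n" for s
  have "continuous_on {-\<delta>..\<delta>} U" "continuous_on {-\<delta>..\<delta>} V"
    unfolding U_def V_def by (intro continuous_intros cont)+
  moreover have "inj_on U {-\<delta>..\<delta>}" "inj_on V {-\<delta>..\<delta>}"
    unfolding U_def V_def using inj_on_mult_odd_power strict_mono_on_imp_inj_on[OF mono]
      \<open>odd m\<close> \<open>odd n\<close> \<open>\<sigma> \<noteq> 0\<close> \<open>\<tau> \<noteq> 0\<close> inj_on_id2 by blast+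
  moreover have "U 0 = 0" "V 0 = 0"
    unfolding U_def V_def using \<open>odd m\<close> \<open>odd n\<close> \<open>h 0 = 0\<close> by (auto simp: odd_pos)
  ultimately have "\<forall>\<^sub>F d in at_right 0. (d < \<delta> \<and>
      (\<exists>a b. a < 0 \<and> 0 < b \<and> b - a < e \<and> U ` {-d<..<d} = {a<..<b})) \<and> (d < \<delta> \<and>
      (\<exists>c d'. c < 0 \<and> 0 < d' \<and> d' - c < e \<and> V ` {-d<..<d} = {c<..<d'}))"
    using \<open>e > 0\<close> \<delta> by (intro eventually_conj continuous_inj_centred_image)
  then obtain d a b c d' where "d < \<delta>" "a < 0" "0 < b" "b - a < e" "U ` {-d<..<d} = {a<..<b}"
    "c < 0" "0 < d'" "d' - c < e" "V ` {-d<..<d} = {c<..<d'}"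
    using eventually_happens'[OF trivial_limit_at_right_real] by blast
  moreover have "curve_img F (U ` {-d<..<d}) = curve_img G (V ` {-d<..<d})"
    unfolding curve_img_def image_image U_def V_def using eq \<open>d < \<delta>\<close> by (intro image_cong) auto
  ultimately show "\<exists>a b c d. a < 0 \<and> 0 < b \<and> b - a < e \<and> c < 0 \<and> 0 < d \<and> d - c < e \<and>
      curve_img F {a<..<b} = curve_img G {c<..<d}"
    by metis
qed

text \<open>For even \<open>m\<close> the left-hand side is even in \<open>s\<close>, so \<open>G\<close> maps the two halves of a
  short interval around 0 onto the same set.\<close>

lemma related_by_powers_bounces_back:
  assumes "related_by_powers F G m n \<sigma> \<tau> \<delta> h" "even m" "odd n"
  shows "bounces_back G"
  unfolding bounces_back_def
proof (intro allI impI)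
  fix e :: real assume "e > 0"
  have \<delta>: "0 < \<delta>" and "\<tau> \<noteq> 0" and cont: "continuous_on {-\<delta>..\<delta>} h"
    and mono: "strict_mono_on {-\<delta>..\<delta>} h" and "h 0 = 0"
    and eq: "\<And>s. s \<in> {-\<delta>..\<delta>} \<Longrightarrow> F (of_real (\<sigma> * s ^ m)) = G (of_real (\<tau> * h s ^ n))"
    using assms unfolding related_by_powers_def by auto
  define V where "V s = \<tau> * h s ^ n" for s
  have "continuous_on {-\<delta>..\<delta>} V" "inj_on V {-\<delta>..\<delta>}" "V 0 = 0"
    unfolding V_def using inj_on_mult_odd_power strict_mono_on_imp_inj_on[OF mono]
      \<open>odd n\<close> \<open>\<tau> \<noteq> 0\<close> \<open>h 0 = 0\<close> by (auto intro!: continuous_intros cont simp: odd_pos)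
  then have "\<forall>\<^sub>F d in at_right 0. d < \<delta> \<and>
      (\<exists>a b. a < 0 \<and> 0 < b \<and> b - a < e \<and> V ` {-d<..<d} = {a<..<b})"
    using \<open>e > 0\<close> \<delta> by (intro continuous_inj_centred_image)
  then obtain d a b where "d < \<delta>" "a < 0" "0 < b" "b - a < e" and image: "V ` {-d<..<d} = {a<..<b}"
    using eventually_happens'[OF trivial_limit_at_right_real] by blast
  define A where "A = {-d<..<d}"
  have A: "A \<subseteq> {-\<delta>..\<delta>}"
    unfolding A_def using \<open>d < \<delta>\<close> by auto
  have sign: "(0 \<le> V s \<longleftrightarrow> 0 \<le> \<tau> * s) \<and> (V s \<le> 0 \<longleftrightarrow> \<tau> * s \<le> 0)" if "s \<in> {-\<delta>..\<delta>}" for s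
    unfolding V_def using sign_of_mult_odd_power_strict_mono[OF mono \<open>h 0 = 0\<close> \<open>odd n\<close> \<open>\<tau> \<noteq> 0\<close> that] by blast
  have halves: "{a<..<b} \<inter> {0..} = V ` {s\<in>A. 0 \<le> \<tau> * s}" "{a<..<b} \<inter> {..0} = V ` {s\<in>A. \<tau> * s \<le> 0}"
    unfolding image[symmetric] A_def[symmetric] using sign A by auto
  have curve_G: "curve_img G (V ` P) = (\<lambda>s. F (of_real (\<sigma> * s ^ m))) ` P" if "P \<subseteq> A" for P
    unfolding curve_img_def image_image V_def using eq that A by (intro image_cong) auto
  have "{s\<in>A. \<tau> * s \<le> 0} = uminus ` {s\<in>A. 0 \<le> \<tau> * s}"
    unfolding A_def by (auto intro!: image_eqI[where x="- s" for s])
  then have "(\<lambda>s. F (of_real (\<sigma> * s ^ m))) ` {s\<in>A. \<tau> * s \<le> 0} =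
      (\<lambda>s. F (of_real (\<sigma> * s ^ m))) ` {s\<in>A. 0 \<le> \<tau> * s}"
    using \<open>even m\<close> by (simp add: image_image)
  then have "curve_img G ({a<..<b} \<inter> {0..}) = curve_img G ({a<..<b} \<inter> {..0})"
    unfolding halves by (subst (1 2) curve_G) auto
  then show "\<exists>a b. a < 0 \<and> 0 < b \<and> b - a < e \<and>
      curve_img G ({a<..<b} \<inter> {0..}) = curve_img G ({a<..<b} \<inter> {..0})"
    using \<open>a < 0\<close> \<open>0 < b\<close> \<open>b - a < e\<close> by blast
qed

lemma roughly_agree_value_at_0:
  assumes "roughly_agree F G" "isCont F 0" "isCont G 0"
  shows "F 0 = G 0"
proof -
  obtain u v :: "nat \<Rightarrow> real" where "u \<longlonglongrightarrow> 0" "v \<longlonglongrightarrow> 0"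
    and eq: "\<forall>k\<ge>1. F (of_real (u k)) = G (of_real (v k))"
    using assms(1) unfolding roughly_agree_def by blast
  have "(\<lambda>k. of_real (u k)) \<longlonglongrightarrow> (0::complex)" "(\<lambda>k. of_real (v k)) \<longlonglongrightarrow> (0::complex)"
    using tendsto_of_real[OF \<open>u \<longlonglongrightarrow> 0\<close>] tendsto_of_real[OF \<open>v \<longlonglongrightarrow> 0\<close>] by simp_all
  then have "(\<lambda>k. F (of_real (u k))) \<longlonglongrightarrow> F 0" "(\<lambda>k. G (of_real (v k))) \<longlonglongrightarrow> G 0"
    using isCont_tendsto_compose assms(2,3) by blast+
  moreover have "\<forall>\<^sub>F k in sequentially. F (of_real (u k)) = G (of_real (v k))"
    using eq by (auto simp: eventually_sequentially)
  ultimately have "(\<lambda>k. F (of_real (u k))) \<longlonglongrightarrow> G 0"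
    by (simp add: tendsto_cong)
  with \<open>(\<lambda>k. F (of_real (u k))) \<longlonglongrightarrow> F 0\<close> show ?thesis
    by (rule LIMSEQ_unique)
qed

lemma share_curve_value_at_0:
  assumes "share_curve F G" "isCont G 0"
  shows "F 0 = G 0"
proof -
  have "\<exists>w. \<bar>w\<bar> < 1 / Suc k \<and> G (of_real w) = F 0" for k
  proof -
    have "1 / Suc k > (0::real)"
      by simp
    then obtain a b c d where "a < 0" "0 < b" "c < 0" "0 < d" "d - c < 1 / Suc k"
      and same: "curve_img F {a<..<b} = curve_img G {c<..<d}"
      using assms(1) unfolding share_curve_def by blast
    have "F 0 \<in> curve_img F {a<..<b}"
      unfolding curve_img_def using \<open>a < 0\<close> \<open>0 < b\<close> by force
    then have "F 0 \<in> curve_img G {c<..<d}"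
      using same by simp
    then obtain w where "w \<in> {c<..<d}" "G (of_real w) = F 0"
      unfolding curve_img_def by auto
    then show ?thesis
      using \<open>d - c < 1 / Suc k\<close> \<open>c < 0\<close> \<open>0 < d\<close> by (intro exI[of _ w]) auto
  qed
  then obtain w where w: "\<And>k. \<bar>w k\<bar> < 1 / Suc k" "\<And>k. G (of_real (w k)) = F 0"
    by metis
  have "w \<longlonglongrightarrow> 0"
    using w(1) by (intro LIMSEQ_norm_0) simp
  then have "(\<lambda>k. of_real (w k)) \<longlonglongrightarrow> (0::complex)"
    using tendsto_of_real by fastforce
  then have "(\<lambda>k. G (of_real (w k))) \<longlonglongrightarrow> G 0"
    using isCont_tendsto_compose assms(2) by blast
  then show ?thesis
    using w(2) LIMSEQ_const_iff by auto
qed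

lemma roughly_agreeI:
  assumes "\<And>\<epsilon>. \<epsilon> > 0 \<Longrightarrow> \<exists>x y. x \<noteq> 0 \<and> y \<noteq> 0 \<and> \<bar>x\<bar> < \<epsilon> \<and> \<bar>y\<bar> < \<epsilon> \<and>
      F (of_real x) = G (of_real y)"
  shows "roughly_agree F G"
proof -
  have "\<exists>x y. x \<noteq> 0 \<and> y \<noteq> 0 \<and> \<bar>x\<bar> < 1 / Suc k \<and> \<bar>y\<bar> < 1 / Suc k \<and>
      F (of_real x) = G (of_real y)" for k
    using assms[of "1 / Suc k"] by simp
  then obtain x y where xy: "\<And>k. x k \<noteq> 0 \<and> y k \<noteq> 0 \<and> \<bar>x k\<bar> < 1 / Suc k \<and> \<bar>y k\<bar> < 1 / Suc k \<and>
      F (of_real (x k)) = G (of_real (y k))"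
    by metis
  have "x \<longlonglongrightarrow> 0" "y \<longlonglongrightarrow> 0"
    using xy by (auto intro: LIMSEQ_norm_0)
  then show ?thesis
    unfolding roughly_agree_def using xy by blast
qed

lemma share_curve_imp_roughly_agree:
  assumes "share_curve F G" "analytic_nonconst_near0 F" "analytic_nonconst_near0 G"
  shows "roughly_agree F G"
proof (rule roughly_agreeI)
  fix \<epsilon> :: real assume "\<epsilon> > 0"
  obtain r where "r > 0" and isolated: "\<And>z. z \<noteq> 0 \<Longrightarrow> norm z < r \<Longrightarrow> F z \<noteq> F 0"
    using analytic_nonconst_near0_isolated_value[OF assms(2)] by blast
  have "F 0 = G 0"
    using share_curve_value_at_0[OF assms(1) analytic_nonconst_near0_isCont[OF assms(3)]] .
  define e where "e = min \<epsilon> r"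
  have "e > 0"
    unfolding e_def using \<open>\<epsilon> > 0\<close> \<open>r > 0\<close> by simp
  then obtain a b c d where "a < 0" "0 < b" "b - a < e" "c < 0" "0 < d" "d - c < e"
    and same: "curve_img F {a<..<b} = curve_img G {c<..<d}"
    using assms(1) unfolding share_curve_def by blast
  define x where "x = b / 2"
  have x: "x \<noteq> 0" "x \<in> {a<..<b}" "\<bar>x\<bar> < e"
    using \<open>a < 0\<close> \<open>0 < b\<close> \<open>b - a < e\<close> unfolding x_def by auto
  then have "F (of_real x) \<in> curve_img F {a<..<b}"
    unfolding curve_img_def by auto
  then have "F (of_real x) \<in> curve_img G {c<..<d}"
    using same by simp
  then obtain y where y: "y \<in> {c<..<d}" "G (of_real y) = F (of_real x)"
    unfolding curve_img_def by auto
  have "F (of_real x) \<noteq> F 0"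
    using isolated[of "of_real x"] x e_def by auto
  then have "y \<noteq> 0"
    using y(2) \<open>F 0 = G 0\<close> by auto
  then show "\<exists>x y. x \<noteq> 0 \<and> y \<noteq> 0 \<and> \<bar>x\<bar> < \<epsilon> \<and> \<bar>y\<bar> < \<epsilon> \<and> F (of_real x) = G (of_real y)"
    using x y \<open>c < 0\<close> \<open>0 < d\<close> \<open>d - c < e\<close> unfolding e_def
    by (intro exI[of _ x] exI[of _ y]) auto
qed

section \<open>Roughly agreeing functions are related by powers\<close>

lemma balancing_exponents:
  fixes a b :: nat
  assumes "a > 0" "b > 0"
  obtains m n where "m > 0" "n > 0" "m * a = n * b" "odd m \<or> odd n"
proof
  let ?m = "b div gcd a b" and ?n = "a div gcd a b"
  show "?m > 0" "?n > 0"
    using assms by (simp_all add: div_greater_zero_iff)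
  show "?m * a = ?n * b"
    by (metis dvd_div_mult gcd_dvd1 gcd_dvd2 mult.commute)
  have "coprime ?m ?n"
    using div_gcd_coprime[of a b] assms by (simp add: coprime_commute)
  then show "odd ?m \<or> odd ?n"
    by (auto dest: coprime_common_divisor[of _ _ 2])
qed

lemma roughly_agree_imp_frequent_power_matches:
  assumes "roughly_agree F G" "m > 0" "n > 0"
  obtains \<sigma> \<tau> s t where "\<sigma> \<in> {-1, 1}" "\<tau> \<in> {-1, 1}" "s \<longlonglongrightarrow> 0" "t \<longlonglongrightarrow> 0"
    "\<exists>\<^sub>F k in sequentially. 0 < s k \<and> 0 < t k \<and>
       F (of_real (\<sigma> * s k ^ m)) = G (of_real (\<tau> * t k ^ n))"
proof -
  obtain u v :: "nat \<Rightarrow> real" where uv: "\<forall>k\<ge>1. u k \<noteq> 0 \<and> v k \<noteq> 0" "u \<longlonglongrightarrow> 0" "v \<longlonglongrightarrow> 0"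
    "\<forall>k\<ge>1. F (of_real (u k)) = G (of_real (v k))"
    using assms(1) unfolding roughly_agree_def by blast
  define s where "s k = root m \<bar>u k\<bar>" for k
  define t where "t k = root n \<bar>v k\<bar>" for k
  have "s \<longlonglongrightarrow> 0" "t \<longlonglongrightarrow> 0"
    unfolding s_def t_def using tendsto_real_root[OF tendsto_rabs[OF uv(2)], of m]
      tendsto_real_root[OF tendsto_rabs[OF uv(3)], of n] by simp_all
  have "\<exists>(\<sigma>, \<tau>) \<in> {-1, 1} \<times> {-1, 1}. 0 < s k \<and> 0 < t k \<and>
      F (of_real (\<sigma> * s k ^ m)) = G (of_real (\<tau> * t k ^ n))" if "k \<ge> 1" for k
  proof -
    have "u k = sgn (u k) * s k ^ m" "v k = sgn (v k) * t k ^ n"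
      unfolding s_def t_def using assms(2,3) by (simp_all add: sgn_mult_abs)
    then show ?thesis
      using uv(1,4) that assms(2,3) unfolding s_def t_def
      by (intro bexI[of _ "(sgn (u k), sgn (v k))"]) (auto simp: sgn_if real_root_gt_zero)
  qed
  then have "\<exists>\<^sub>F k in sequentially. \<exists>(\<sigma>, \<tau>) \<in> {-1, 1} \<times> {-1, 1}. 0 < s k \<and> 0 < t k \<and>
      F (of_real (\<sigma> * s k ^ m)) = G (of_real (\<tau> * t k ^ n))"
    by (intro eventually_frequently) (auto simp: eventually_sequentially)
  then have "\<exists>(\<sigma>, \<tau>) \<in> {-1, 1} \<times> {-1, 1}. \<exists>\<^sub>F k in sequentially. 0 < s k \<and> 0 < t k \<and>
      F (of_real (\<sigma> * s k ^ m)) = G (of_real (\<tau> * t k ^ n))"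
    unfolding case_prod_beta by (intro frequently_bex_finite) auto
  then show thesis
    using that \<open>s \<longlonglongrightarrow> 0\<close> \<open>t \<longlonglongrightarrow> 0\<close> by blast
qed

lemma frequently_root_of_unity_ratio:
  fixes a b :: "'a \<Rightarrow> complex"
  assumes "L > 0" and "\<exists>\<^sub>F k in F. P k \<and> a k ^ L = b k ^ L \<and> b k \<noteq> 0"
  obtains \<omega> where "\<omega> ^ L = 1" "\<exists>\<^sub>F k in F. P k \<and> a k = \<omega> * b k"
proof -
  have freq: "\<exists>\<^sub>F k in F. \<exists>\<omega>\<in>{w. w ^ L = 1}. P k \<and> a k = \<omega> * b k"
    using assms(2)
  proof (rule frequently_elim1, elim conjE)
    fix k assume "P k" "a k ^ L = b k ^ L" "b k \<noteq> 0"
    then show "\<exists>\<omega>\<in>{w. w ^ L = 1}. P k \<and> a k = \<omega> * b k"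
      by (intro bexI[of _ "a k / b k"]) (auto simp: power_divide)
  qed
  have "finite {w::complex. w ^ L = 1}"
    using \<open>L > 0\<close> by (intro finite_roots_unity) simp
  from frequently_bex_finite[OF this freq] show thesis
    using that by blast
qed

lemma related_by_powers_from_charts:
  assumes \<alpha>: "\<alpha> holomorphic_on ball 0 \<rho>" "inj_on \<alpha> (ball 0 \<rho>)" "\<alpha> 0 = 0" "\<rho> > 0"
      "\<And>z. z \<in> ball 0 \<rho> \<Longrightarrow> F (of_real \<sigma> * z ^ m) - F 0 = \<alpha> z ^ L"
    and \<beta>: "\<beta> holomorphic_on ball 0 r" "inj_on \<beta> (ball 0 r)" "\<beta> 0 = 0" "r > 0"
      "\<And>z. z \<in> ball 0 r \<Longrightarrow> G (of_real \<tau> * z ^ n) - G 0 = \<beta> z ^ L"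
    and "L > 0" "F 0 = G 0" "\<sigma> \<noteq> 0" "\<tau> \<noteq> 0" "s \<longlonglongrightarrow> 0" "t \<longlonglongrightarrow> 0"
    and match: "\<exists>\<^sub>F k in sequentially. 0 < s k \<and> 0 < t k \<and>
       F (of_real (\<sigma> * s k ^ m)) = G (of_real (\<tau> * t k ^ n))"
  obtains \<delta> h where "related_by_powers F G m n \<sigma> \<tau> \<delta> h"
proof -
  have "\<forall>\<^sub>F k in sequentially. s k < \<rho> \<and> t k < r"
    using \<alpha>(4) \<beta>(4)
    by (intro eventually_conj order_tendstoD(2)[OF \<open>s \<longlonglongrightarrow> 0\<close>] order_tendstoD(2)[OF \<open>t \<longlonglongrightarrow> 0\<close>])
  with match have "\<exists>\<^sub>F k in sequentially. (0 < s k \<and> 0 < t k) \<and>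
      \<alpha> (of_real (s k)) ^ L = \<beta> (of_real (t k)) ^ L \<and> \<beta> (of_real (t k)) \<noteq> 0"
  proof (rule frequently_eventually_frequently[THEN frequently_elim1], elim conjE)
    fix k assume k: "0 < s k" "0 < t k" "F (of_real (\<sigma> * s k ^ m)) = G (of_real (\<tau> * t k ^ n))"
      "s k < \<rho>" "t k < r"
    have "\<alpha> (of_real (s k)) ^ L = \<beta> (of_real (t k)) ^ L"
      using \<alpha>(5)[of "of_real (s k)"] \<beta>(5)[of "of_real (t k)"] k \<open>F 0 = G 0\<close> by simp
    moreover have "\<beta> (of_real (t k)) \<noteq> 0"
      using inj_onD[OF \<beta>(2), of "of_real (t k)" 0] \<beta>(3,4) k(2,5) by auto
    ultimately show "(0 < s k \<and> 0 < t k) \<and>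
        \<alpha> (of_real (s k)) ^ L = \<beta> (of_real (t k)) ^ L \<and> \<beta> (of_real (t k)) \<noteq> 0"
      using k(1,2) by blast
  qed
  from frequently_root_of_unity_ratio[OF \<open>L > 0\<close> this] obtain \<omega> where "\<omega> ^ L = 1"
    and match_\<omega>: "\<exists>\<^sub>F k in sequentially. (0 < s k \<and> 0 < t k) \<and> \<alpha> (of_real (s k)) = \<omega> * \<beta> (of_real (t k))"
    by blast
  have "\<omega> \<noteq> 0"
    using \<open>\<omega> ^ L = 1\<close> \<open>L > 0\<close> by (auto simp: power_0_left)
  have \<alpha>\<omega>: "(\<lambda>z. \<alpha> z / \<omega>) holomorphic_on ball 0 \<rho>" "inj_on (\<lambda>z. \<alpha> z / \<omega>) (ball 0 \<rho>)" "\<alpha> 0 / \<omega> = 0"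
    using \<alpha>(1-3) \<open>\<omega> \<noteq> 0\<close> by (auto intro!: holomorphic_intros simp: inj_on_def)
  have "\<exists>\<^sub>F k in sequentially. 0 < s k \<and> 0 < t k \<and> \<alpha> (of_real (s k)) / \<omega> = \<beta> (of_real (t k))"
    using match_\<omega> by (rule frequently_elim1) (use \<open>\<omega> \<noteq> 0\<close> in auto)
  then obtain \<delta> h where h: "0 < \<delta>" "\<delta> < \<rho>" "continuous_on {-\<delta>..\<delta>} h" "strict_mono_on {-\<delta>..\<delta>} h"
    "h 0 = 0" "\<And>x. x \<in> {-\<delta>..\<delta>} \<Longrightarrow>
      (of_real (h x) :: complex) \<in> ball 0 r \<and> \<beta> (of_real (h x)) = \<alpha> (of_real x) / \<omega>"
    using real_conjugacy_from_frequent_matches[OF \<alpha>\<omega> \<alpha>(4) \<beta>(1-4) \<open>s \<longlonglongrightarrow> 0\<close> \<open>t \<longlonglongrightarrow> 0\<close>]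
    by blast
  have "F (of_real (\<sigma> * x ^ m)) = G (of_real (\<tau> * h x ^ n))" if "x \<in> {-\<delta>..\<delta>}" for x
  proof -
    have "\<bar>x\<bar> < \<rho>"
      using that h(2) by (auto simp: abs_less_iff)
    then have "F (of_real (\<sigma> * x ^ m)) - F 0 = \<alpha> (of_real x) ^ L"
      using \<alpha>(5)[of "of_real x"] by simp
    also have "\<alpha> (of_real x) = \<omega> * \<beta> (of_real (h x))"
      using h(6)[OF that] \<open>\<omega> \<noteq> 0\<close> by simp
    also have "(\<omega> * \<beta> (of_real (h x))) ^ L = \<beta> (of_real (h x)) ^ L"
      using \<open>\<omega> ^ L = 1\<close> by (simp add: power_mult_distrib)
    also have "\<dots> = G (of_real (\<tau> * h x ^ n)) - G 0"
      using \<beta>(5)[of "of_real (h x)"] h(6)[OF that] by simp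
    finally show ?thesis
      using \<open>F 0 = G 0\<close> by simp
  qed
  then show thesis
    using that h(1,3-5) \<open>\<sigma> \<noteq> 0\<close> \<open>\<tau> \<noteq> 0\<close> unfolding related_by_powers_def by blast
qed

lemma roughly_agree_imp_related_by_powers:
  assumes "analytic_nonconst_near0 F" "analytic_nonconst_near0 G" "roughly_agree F G"
  obtains m n \<sigma> \<tau> \<delta> h where "odd m \<or> odd n" "related_by_powers F G m n \<sigma> \<tau> \<delta> h"
proof -
  obtain rF a p where F: "rF > 0" "a > 0" "p holomorphic_on ball 0 rF"
    "\<And>z. z \<in> ball 0 rF \<Longrightarrow> p z \<noteq> 0 \<and> F z - F 0 = (z * p z) ^ a"
    using analytic_nonconst_near0_factor[OF assms(1)] by blast
  obtain rG b q where G: "rG > 0" "b > 0" "q holomorphic_on ball 0 rG"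
    "\<And>z. z \<in> ball 0 rG \<Longrightarrow> q z \<noteq> 0 \<and> G z - G 0 = (z * q z) ^ b"
    using analytic_nonconst_near0_factor[OF assms(2)] by blast
  obtain m n where "m > 0" "n > 0" "m * a = n * b" "odd m \<or> odd n"
    using balancing_exponents[OF F(2) G(2)] by blast
  obtain \<sigma> \<tau> s t where "\<sigma> \<in> {-1, 1}" "\<tau> \<in> {-1, 1}" "s \<longlonglongrightarrow> 0" "t \<longlonglongrightarrow> 0"
    and match: "\<exists>\<^sub>F k in sequentially. 0 < s k \<and> 0 < t k \<and>
       F (of_real (\<sigma> * s k ^ m)) = G (of_real (\<tau> * t k ^ n))"
    using roughly_agree_imp_frequent_power_matches[OF assms(3) \<open>m > 0\<close> \<open>n > 0\<close>] by blast
  have "norm (of_real \<sigma> :: complex) = 1" "norm (of_real \<tau> :: complex) = 1"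
    using \<open>\<sigma> \<in> {-1, 1}\<close> \<open>\<tau> \<in> {-1, 1}\<close> by auto
  obtain \<rho> \<alpha> where \<alpha>: "\<alpha> holomorphic_on ball 0 \<rho>" "inj_on \<alpha> (ball 0 \<rho>)" "\<alpha> 0 = 0" "\<rho> > 0"
    "\<And>z. z \<in> ball 0 \<rho> \<Longrightarrow> F (of_real \<sigma> * z ^ m) - F 0 = \<alpha> z ^ (m * a)"
    using power_substitution_normal_form[OF F(1,3,4) \<open>m > 0\<close> \<open>norm (of_real \<sigma>) = 1\<close>] by metis
  obtain r \<beta> where \<beta>: "\<beta> holomorphic_on ball 0 r" "inj_on \<beta> (ball 0 r)" "\<beta> 0 = 0" "r > 0"
    "\<And>z. z \<in> ball 0 r \<Longrightarrow> G (of_real \<tau> * z ^ n) - G 0 = \<beta> z ^ (m * a)"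
    using power_substitution_normal_form[OF G(1,3,4) \<open>n > 0\<close> \<open>norm (of_real \<tau>) = 1\<close>]
    unfolding \<open>m * a = n * b\<close> by metis
  have "F 0 = G 0"
    using roughly_agree_value_at_0[OF assms(3)] analytic_nonconst_near0_isCont assms(1,2) by blast
  moreover have "m * a > 0" "\<sigma> \<noteq> 0" "\<tau> \<noteq> 0"
    using \<open>m > 0\<close> F(2) \<open>\<sigma> \<in> {-1, 1}\<close> \<open>\<tau> \<in> {-1, 1}\<close> by auto
  ultimately obtain \<delta> h where "related_by_powers F G m n \<sigma> \<tau> \<delta> h"
    using related_by_powers_from_charts[OF \<alpha> \<beta> \<open>m * a > 0\<close> \<open>F 0 = G 0\<close> \<open>\<sigma> \<noteq> 0\<close> \<open>\<tau> \<noteq> 0\<close>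
        \<open>s \<longlonglongrightarrow> 0\<close> \<open>t \<longlonglongrightarrow> 0\<close> match]
    by blast
  then show thesis
    using that \<open>odd m \<or> odd n\<close> by blast
qed

theorem proposition4:
  fixes F G :: "complex \<Rightarrow> complex"
  assumes "analytic_nonconst_near0 F" and "analytic_nonconst_near0 G"
    and "\<not> bounces_back F" and "\<not> bounces_back G"
  shows "roughly_agree F G \<longleftrightarrow> share_curve F G"
proof
  assume "roughly_agree F G"
  then obtain m n \<sigma> \<tau> \<delta> h where "odd m \<or> odd n" and rel: "related_by_powers F G m n \<sigma> \<tau> \<delta> h"
    using roughly_agree_imp_related_by_powers assms(1,2) by blast
  obtain \<eta> g where rel': "related_by_powers G F n m \<tau> \<sigma> \<eta> g"
    using related_by_powers_sym[OF rel] .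
  consider "odd m" "odd n" | "even m" "odd n" | "odd m" "even n"
    using \<open>odd m \<or> odd n\<close> by blast
  then show "share_curve F G"
  proof cases
    case 1
    then show ?thesis
      using related_by_powers_share_curve[OF rel] by blast
  next
    case 2
    then show ?thesis
      using related_by_powers_bounces_back[OF rel] assms(4) by blast
  next
    case 3
    then show ?thesis
      using related_by_powers_bounces_back[OF rel'] assms(3) by blast
  qed
next
  assume "share_curve F G"
  then show "roughly_agree F G"
    using share_curve_imp_roughly_agree assms(1,2) by blast
qed

end
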